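(* Assume: (C2)$'$ there exist $p_0>1$ and $C_0>0$ with $|c({\bm z},w)|\le C_0(\|{\bm z}\|^{p_0-1}+|w|^{p_0-1}+1)$ for all $({\bm z},w)\in Z\times Y$; (C4)$'$ $c({\bm z},\cdot)$ is differentiable and there exist $C_1>0$, $p_1\ge1$ with $|c_2'({\bm z}_1,w_1)-c_2'({\bm z}_2,w_2)|\le C_1L_{p_1}({\bm z}_1,{\bm z}_2)(\|{\bm z}_1-{\bm z}_2\|+|w_1-w_2|)$ for all $w_1,w_2\in\mathbb{R}$, ${\bm z}_1,{\bm z}_2\in Z$; (C5) $c({\bm z},\cdot)$ is twice differentiable and there exist $C_2>0$, $p_2\ge1$ with $|c_2''({\bm z}_1,w_1)-c_2''({\bm z}_2,w_2)|\le C_2L_{p_2}({\bm z}_1,{\bm z}_2)(\|{\bm z}_1-{\bm z}_2\|+|w_1-w_2|)$ for all $w_1,w_2\in Y$, ${\bm z}_1,{\bm z}_2\in Z$; (K1)$'$ there is $C_3>0$ with $\|k_{{\bm x}_1}-k_{{\bm x}_2}\|_k\le C_3\|{\bm x}_1-{\bm x}_2\|$ for all ${\bm x}_1,{\bm x}_2\in X$. For ${\bm h}\in{\cal H}_k$ (and a given ${\bm f}$) let $$\widetilde{\mathcal P}_{\bm h}:=\{Q\in\mathscr{P}(Z):\mathbb{E}_Q[|c_2'({\bm z},{\bm f}({\bm x}))|\|k_{\bm x}\|_k]<\infty,\ \mathbb{E}_Q[|c_2''({\bm z},{\bm f}({\bm x}))|\|T_{\bm x}{\bm h}\|_k]<\infty\},$$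 where $T_{\bm x}{\bm h}:=k_{\bm x}\langle k_{\bm x},{\bm h}\rangle$. Then ${\cal M}_Z^{\max\{p_1+1,p_2+2\}}\subset\widetilde{\mathcal P}_{\bm h}$ for all ${\bm h}\in{\cal H}_k$, and $$D_{\bm f}\big(\mathbb{E}_Q[c_2'({\bm z},{\bm f}({\bm x}))k_{\bm x}]\big)=\mathbb{E}_Q[c_2''({\bm z},{\bm f}({\bm x}))T_{\bm x}]\quad\forall Q\in{\cal M}_Z^{\max\{p_1+1,p_2+2\}}.$$
   Context: Setting: $X\subset\mathbb{R}^n$, $Y\subset\mathbb{R}$, $Z=X\times Y$ with norm $\|\cdot\|$, ${\bm z}=({\bm x},y)$; $k$ a Mercer kernel on $X$ with RKHS ${\cal H}_k$ (norm $\|\cdot\|_k$), $k_{\bm x}=k(\cdot,{\bm x})$, ${\bm f}({\bm x})=\langle{\bm f},k_{\bm x}\rangle$; $c:Z\times\mathbb{R}\to[0,\infty)$ a loss with $c_2',c_2''$ its first and second derivatives in the second argument. $L_p({\bm z}_1,{\bm z}_2):=\max\{1,\|{\bm z}_1\|,\|{\bm z}_2\|\}^{p-1}$. ${\cal M}_Z^q:=\{Q\in\mathscr{P}(Z):\int_Z\|{\bm z}\|^qQ(d{\bm z})<\infty\}$. $T_{\bm x}$ is a bounded linear operator on ${\cal H}_k$; $D_{\bm f}$ is the Gâteaux derivative of the ${\cal H}_k$-valued map ${\bm f}\mapsto\mathbb{E}_Q[c_2'({\bm z},{\bm f}({\bm x}))k_{\bm x}]$, a bounded linear operator on ${\cal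 H}_k$. *)

theory Defs
  imports "HOL-Probability.Probability"
begin

definition mercer_kernel :: "'x::topological_space set \<Rightarrow> ('x \<Rightarrow> 'x \<Rightarrow> real) \<Rightarrow> bool" where
  "mercer_kernel X k \<longleftrightarrow> continuous_on (X \<times> X) (\<lambda>p. k (fst p) (snd p))
     \<and> (\<forall>x\<in>X. \<forall>y\<in>X. k x y = k y x)
     \<and> (\<forall>xs a. set xs \<subseteq> X \<longrightarrow> length a = length xs \<longrightarrow>
          (\<Sum>i<length xs. \<Sum>j<length xs. a!i * a!j * k (xs!i) (xs!j)) \<ge> 0)"

definition Lp :: "real \<Rightarrow> 'z::real_normed_vector \<Rightarrow> 'z \<Rightarrow> real" where
  "Lp p z1 z2 = (max 1 (max (norm z1) (norm z2))) powr (p - 1)"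

definition prob_on :: "'z::topological_space set \<Rightarrow> 'z measure \<Rightarrow> bool" where
  "prob_on Z Q \<longleftrightarrow> prob_space Q \<and> space Q = Z \<and> sets Q = sets (restrict_space borel Z)"

definition moment_class :: "'z::real_normed_vector set \<Rightarrow> real \<Rightarrow> 'z measure set" where
  "moment_class Z q = {Q. prob_on Z Q \<and> (\<integral>\<^sup>+ z. ennreal (norm z powr q) \<partial>Q) < \<infinity>}"

definition Tx :: "('x \<Rightarrow> 'h::real_inner) \<Rightarrow> 'x \<Rightarrow> 'h \<Rightarrow> 'h" where
  "Tx kx x h = inner (kx x) h *\<^sub>R kx x"

definition Ptilde :: "('x::topological_space \<times> real) set \<Rightarrow> ('x \<times> real \<Rightarrow> real \<Rightarrow> real) \<Rightarrow> ('x \<times> real \<Rightarrow> real \<Rightarrow> real)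
     \<Rightarrow> ('x \<Rightarrow> 'h::real_inner) \<Rightarrow> 'h \<Rightarrow> 'h \<Rightarrow> ('x \<times> real) measure set" where
  "Ptilde Z c' c'' kx f h = {Q. prob_on Z Q
     \<and> (\<integral>\<^sup>+ z. ennreal (\<bar>c' z (inner f (kx (fst z)))\<bar> * norm (kx (fst z))) \<partial>Q) < \<infinity>
     \<and> (\<integral>\<^sup>+ z. ennreal (\<bar>c'' z (inner f (kx (fst z)))\<bar> * norm (Tx kx (fst z) h)) \<partial>Q) < \<infinity>}"

end

theory Submission
  imports Defs
begin

(* Write <z> for max 1 (norm z). Condition (C4') alone already controls everything: for fixed z
   it makes c'(z,-) Lipschitz with constant C1 <z>^(p1-1), which bounds both c''(z,-) and the
   difference quotients of t \<mapsto> c'(z, (f + t h)(x)), and comparing with a base point gives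
   |c'(z,w)| = O(<z>^p1) for |w| = O(<z>); (K1') gives norm k_x = O(<z>). So every integrand
   in sight is dominated by a multiple of <z>^(p1+1), which is Q-integrable on the moment class
   of order p1 + 1 (containing that of order max (p1+1) (p2+2)), and dominated convergence
   differentiates under the integral. Only (C4'), the differentiability of c' and (K1') are
   used. *)

lemma has_vector_derivative_iff_difference_quotient:
  fixes F :: "real \<Rightarrow> 'a::real_normed_vector"
  shows "(F has_vector_derivative D) (at x within S) \<longleftrightarrow>
    ((\<lambda>y. (F y - F x) /\<^sub>R (y - x)) \<longlongrightarrow> D) (at x within S)"
proof -
  have "norm (F y - F x - (y - x) *\<^sub>R D) / norm (y - x) = norm ((F y - F x) /\<^sub>R (y - x) - D)"
    if "y \<noteq> x" for y
  proof -
    have "F y - F x - (y - x) *\<^sub>R D = (y - x) *\<^sub>R ((F y - F x) /\<^sub>R (y - x) - D)"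
      using that by (simp add: scaleR_right_diff_distrib)
    then show ?thesis using that by simp
  qed
  then have "((\<lambda>y. norm (F y - F x - (y - x) *\<^sub>R D) / norm (y - x)) \<longlongrightarrow> 0) (at x within S)
      \<longleftrightarrow> ((\<lambda>y. (F y - F x) /\<^sub>R (y - x) - D) \<longlongrightarrow> 0) (at x within S)"
    by (subst tendsto_norm_zero_iff[symmetric]) (intro Lim_cong_within refl, auto)
  then show ?thesis
    by (simp add: has_vector_derivative_def has_derivative_iff_norm bounded_linear_scaleR_left LIM_zero_iff)
qed

lemma abs_DERIV_le_lipschitz:
  assumes "(g has_real_derivative d) (at w)" and "\<And>u v. \<bar>g u - g v\<bar> \<le> L * \<bar>u - v\<bar>"
  shows "\<bar>d\<bar> \<le> L"
proof (rule tendsto_upperbound)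
  show "((\<lambda>u. \<bar>(g u - g w) / (u - w)\<bar>) \<longlongrightarrow> \<bar>d\<bar>) (at w)"
    using assms(1) unfolding has_field_derivative_iff by (rule tendsto_rabs)
  show "\<forall>\<^sub>F u in at w. \<bar>(g u - g w) / (u - w)\<bar> \<le> L"
    unfolding eventually_at_filter
    by (rule always_eventually) (use assms(2) in \<open>auto simp: abs_divide divide_le_eq\<close>)
qed simp

lemma max_one_powr_le_one_add_powr:
  fixes n r q :: real
  assumes "0 \<le> n" "0 \<le> r" "r \<le> q"
  shows "max 1 n powr r \<le> 1 + n powr q"
proof (cases "n \<le> 1")
  case False
  then have "n powr r \<le> n powr q" using assms by (intro powr_mono) auto
  moreover have "max 1 n = n" using False by simp
  ultimately show ?thesis by simp
qed simp

lemma borel_measurable_vector_derivative: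
  fixes g :: "real \<Rightarrow> 'a \<Rightarrow> 'b::{real_normed_vector, second_countable_topology}"
  assumes "\<And>t. g t \<in> borel_measurable M"
    and "\<And>z. z \<in> space M \<Longrightarrow> ((\<lambda>t. g t z) has_vector_derivative g' z) (at x)"
  shows "g' \<in> borel_measurable M"
proof (rule borel_measurable_LIMSEQ_metric)
  define T where "T i = x + inverse (real (Suc i))" for i
  show "(\<lambda>z. (g (T i) z - g x z) /\<^sub>R (T i - x)) \<in> borel_measurable M" for i
    by (intro borel_measurable_scaleR borel_measurable_diff borel_measurable_const assms(1))
  show "(\<lambda>i. (g (T i) z - g x z) /\<^sub>R (T i - x)) \<longlonglongrightarrow> g' z" if "z \<in> space M" for z
  proof -
    have "T \<longlonglongrightarrow> x"
      unfolding T_def using tendsto_add[OF tendsto_const LIMSEQ_inverse_real_of_nat] by simp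
    moreover have "\<forall>i. T i \<in> UNIV - {x}" by (simp add: T_def)
    ultimately show ?thesis
      using assms(2)[OF that]
      unfolding has_vector_derivative_iff_difference_quotient tendsto_at_iff_sequentially comp_def
      by blast
  qed
qed

lemma has_vector_derivative_integral:
  fixes g :: "real \<Rightarrow> 'a \<Rightarrow> 'b::{banach, second_countable_topology}"
  assumes integrable: "\<And>t. integrable M (g t)"
    and derivative: "\<And>z. z \<in> space M \<Longrightarrow> ((\<lambda>t. g t z) has_vector_derivative g' z) (at x)"
    and "integrable M w"
    and dominated: "\<And>t z. z \<in> space M \<Longrightarrow> t \<noteq> x \<Longrightarrow> norm ((g t z - g x z) /\<^sub>R (t - x)) \<le> w z"
  shows "((\<lambda>t. \<integral>z. g t z \<partial>M) has_vector_derivative (\<integral>z. g' z \<partial>M)) (at x)"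
  unfolding has_vector_derivative_iff_difference_quotient tendsto_at_iff_sequentially
proof (intro allI impI)
  fix T :: "nat \<Rightarrow> real" assume T: "\<forall>i. T i \<in> UNIV - {x}" and "T \<longlonglongrightarrow> x"
  have quotient_limit: "(\<lambda>i. (g (T i) z - g x z) /\<^sub>R (T i - x)) \<longlonglongrightarrow> g' z"
    if "z \<in> space M" for z
    using derivative[OF that] T \<open>T \<longlonglongrightarrow> x\<close>
    unfolding has_vector_derivative_iff_difference_quotient tendsto_at_iff_sequentially comp_def
    by blast
  have g_measurable: "g t \<in> borel_measurable M" for t
    using integrable by (rule borel_measurable_integrable)
  have "(\<lambda>i. \<integral>z. (g (T i) z - g x z) /\<^sub>R (T i - x) \<partial>M) \<longlonglongrightarrow> (\<integral>z. g' z \<partial>M)"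
  proof (rule integral_dominated_convergence[where w=w])
    show "g' \<in> borel_measurable M"
      using g_measurable derivative by (rule borel_measurable_vector_derivative)
  qed (use g_measurable quotient_limit dominated T \<open>integrable M w\<close> in \<open>auto intro!: AE_I2\<close>)
  moreover have "(\<lambda>t. ((\<integral>z. g t z \<partial>M) - (\<integral>z. g x z \<partial>M)) /\<^sub>R (t - x)) \<circ> T
      = (\<lambda>i. \<integral>z. (g (T i) z - g x z) /\<^sub>R (T i - x) \<partial>M)"
    by (rule ext)
      (simp only: comp_def integral_scaleR_right Bochner_Integration.integral_diff[OF integrable integrable])
  ultimately show "((\<lambda>t. ((\<integral>z. g t z \<partial>M) - (\<integral>z. g x z \<partial>M)) /\<^sub>R (t - x)) \<circ> T)
      \<longlonglongrightarrow> (\<integral>z. g' z \<partial>M)"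
    by (simp only:)
qed

lemma bounded_linear_integral:
  fixes G :: "'b::real_normed_vector \<Rightarrow> 'a \<Rightarrow> 'c::{banach, second_countable_topology}"
  assumes linear: "\<And>z. linear (\<lambda>h. G h z)"
    and measurable: "\<And>h. G h \<in> borel_measurable M"
    and "integrable M w"
    and bound: "\<And>h z. z \<in> space M \<Longrightarrow> norm (G h z) \<le> norm h * w z"
  shows "bounded_linear (\<lambda>h. \<integral>z. G h z \<partial>M)"
proof (rule bounded_linear_intro)
  have integrable: "integrable M (G h)" for h
  proof (rule Bochner_Integration.integrable_bound[where f="\<lambda>z. norm h * w z"])
    show "integrable M (\<lambda>z. norm h * w z)" using \<open>integrable M w\<close> by simp
    show "AE z in M. norm (G h z) \<le> norm (norm h * w z)"
      using bound by (intro AE_I2) (smt (verit) real_norm_def)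
  qed (rule measurable)
  show "(\<integral>z. G (h + k) z \<partial>M) = (\<integral>z. G h z \<partial>M) + (\<integral>z. G k z \<partial>M)" for h k
    using integrable linear_add[OF linear] by simp
  show "(\<integral>z. G (r *\<^sub>R h) z \<partial>M) = r *\<^sub>R (\<integral>z. G h z \<partial>M)" for r h
    using linear_scale[OF linear] by simp
  show "norm (\<integral>z. G h z \<partial>M) \<le> norm h * (\<integral>z. w z \<partial>M)" for h
  proof -
    have "norm (\<integral>z. G h z \<partial>M) \<le> (\<integral>z. norm (G h z) \<partial>M)"
      by (rule integral_norm_bound)
    also have "\<dots> \<le> (\<integral>z. norm h * w z \<partial>M)"
      using integrable \<open>integrable M w\<close> bound by (intro integral_mono) auto
    finally show ?thesis by simp
  qed
qed

lemma max_one_norm_powr_mult: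
  "max 1 (norm z) powr a * max 1 (norm z) = max 1 (norm z) powr (a + 1)"
  by (simp add: powr_add)

lemma lipschitz_on_linear_growth:
  assumes "C-lipschitz_on X f"
  obtains A where "0 \<le> A" "\<And>x. x \<in> X \<Longrightarrow> norm (f x) \<le> A * max 1 (norm x)"
proof (cases "X = {}")
  case False
  then obtain x0 where x0: "x0 \<in> X" by blast
  have C: "0 \<le> C" using assms by (rule lipschitz_on_nonneg)
  show ?thesis
  proof
    show "0 \<le> norm (f x0) + C * norm x0 + C" using C by simp
    fix x assume "x \<in> X"
    have "norm (f x) \<le> norm (f x0) + C * norm (x - x0)"
      using lipschitz_on_normD[OF assms \<open>x \<in> X\<close> x0] norm_triangle_sub[of "f x" "f x0"] by simp
    also have "\<dots> \<le> norm (f x0) + C * norm x0 + C * norm x"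
      using mult_left_mono[OF norm_triangle_ineq4[of x x0] C] by (simp add: distrib_left)
    also have "\<dots> \<le> (norm (f x0) + C * norm x0 + C) * max 1 (norm x)"
    proof -
      have "norm (f x0) + C * norm x0 \<le> (norm (f x0) + C * norm x0) * max 1 (norm x)"
        using mult_left_mono[of 1 "max 1 (norm x)" "norm (f x0) + C * norm x0"] C by simp
      moreover have "C * norm x \<le> C * max 1 (norm x)" using C by (intro mult_left_mono) auto
      ultimately show ?thesis by (simp add: distrib_right)
    qed
    finally show "norm (f x) \<le> (norm (f x0) + C * norm x0 + C) * max 1 (norm x)" .
  qed
qed auto

lemma borel_measurable_continuous_on_prob_on:
  assumes "prob_on Z Q" "continuous_on Z g"
  shows "g \<in> borel_measurable Q"
proof -
  have "sets Q = sets (restrict_space borel Z)" using assms(1) by (simp add: prob_on_def)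
  then show ?thesis
    unfolding measurable_cong_sets[OF _ refl] using borel_measurable_continuous_on_restrict[OF assms(2)] by simp
qed

lemma integrable_norm_powr_moment_class:
  assumes "Q \<in> moment_class Z q"
  shows "integrable Q (\<lambda>z. norm z powr q)"
proof (rule integrableI_bounded)
  have "(\<lambda>z. norm z) \<in> borel_measurable Q"
    using assms by (intro borel_measurable_continuous_on_prob_on[of Z] continuous_on_norm_id)
      (simp add: moment_class_def)
  then show "(\<lambda>z. norm z powr q) \<in> borel_measurable Q"
    by (intro powr_real_measurable borel_measurable_const)
  show "(\<integral>\<^sup>+ z. ennreal (norm (norm z powr q)) \<partial>Q) < \<infinity>"
    using assms by (simp add: moment_class_def)
qed

lemma moment_class_antimono:
  assumes "0 \<le> r" "r \<le> q"
  shows "moment_class Z q \<subseteq> moment_class Z r"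
proof
  fix Q assume Q: "Q \<in> moment_class Z q"
  then have "prob_on Z Q" by (simp add: moment_class_def)
  then interpret prob_space Q by (simp add: prob_on_def)
  have "integrable Q (\<lambda>z. 1 + norm z powr q)"
    using integrable_norm_powr_moment_class[OF Q] by simp
  moreover have "(\<lambda>z. norm z powr r) \<in> borel_measurable Q"
    by (intro powr_real_measurable borel_measurable_const
        borel_measurable_continuous_on_prob_on[OF \<open>prob_on Z Q\<close>] continuous_on_norm_id)
  moreover have "norm (norm z powr r) \<le> norm (1 + norm z powr q)" for z :: 'a
  proof -
    have "norm z powr r \<le> max 1 (norm z) powr r" using assms(1) by (intro powr_mono2) auto
    also have "\<dots> \<le> 1 + norm z powr q" using assms by (intro max_one_powr_le_one_add_powr) auto
    finally show ?thesis by simp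
  qed
  ultimately have "integrable Q (\<lambda>z. norm z powr r)"
    by (auto intro: Bochner_Integration.integrable_bound)
  then show "Q \<in> moment_class Z r"
    using \<open>prob_on Z Q\<close> by (simp add: moment_class_def integrable_iff_bounded)
qed

definition Lp_lipschitz_on ::
    "real \<Rightarrow> real \<Rightarrow> 'z::real_normed_vector set \<Rightarrow> ('z \<Rightarrow> real \<Rightarrow> real) \<Rightarrow> bool" where
  "Lp_lipschitz_on C p Z \<phi> \<longleftrightarrow> (\<forall>z1\<in>Z. \<forall>z2\<in>Z. \<forall>w1 w2.
     \<bar>\<phi> z1 w1 - \<phi> z2 w2\<bar> \<le> C * Lp p z1 z2 * (norm (z1 - z2) + \<bar>w1 - w2\<bar>))"

lemma Lp_le_mult:
  assumes "1 \<le> p"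
  shows "Lp p z1 z2 \<le> max 1 (norm z1) powr (p - 1) * max 1 (norm z2) powr (p - 1)"
proof -
  have "max 1 (max (norm z1) (norm z2)) \<le> max 1 (norm z1) * max 1 (norm z2)"
    by (smt (verit, best) mult_le_cancel_left1 mult_le_cancel_right1 norm_ge_zero)
  then have "max 1 (max (norm z1) (norm z2)) powr (p - 1)
      \<le> (max 1 (norm z1) * max 1 (norm z2)) powr (p - 1)"
    using assms by (intro powr_mono2) auto
  then show ?thesis by (simp add: Lp_def powr_mult)
qed

lemma Lp_lipschitz_on_second_arg:
  assumes "Lp_lipschitz_on C p Z \<phi>" "z \<in> Z"
  shows "\<bar>\<phi> z u - \<phi> z v\<bar> \<le> C * max 1 (norm z) powr (p - 1) * \<bar>u - v\<bar>"
proof -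
  have "\<bar>\<phi> z u - \<phi> z v\<bar> \<le> C * Lp p z z * (norm (z - z) + \<bar>u - v\<bar>)"
    using assms unfolding Lp_lipschitz_on_def by blast
  then show ?thesis by (simp add: Lp_def)
qed

lemma Lp_lipschitz_on_abs_derivative_le:
  assumes "Lp_lipschitz_on C p Z \<phi>" "z \<in> Z" "(\<phi> z has_real_derivative d) (at w)"
  shows "\<bar>d\<bar> \<le> C * max 1 (norm z) powr (p - 1)"
  using assms(3) Lp_lipschitz_on_second_arg[OF assms(1,2)] by (rule abs_DERIV_le_lipschitz)

lemma Lp_lipschitz_on_continuous_on:
  assumes "Lp_lipschitz_on C p Z \<phi>" "continuous_on Z g"
  shows "continuous_on Z (\<lambda>z. \<phi> z (g z))"
  unfolding continuous_on_def
proof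
  fix z0 assume "z0 \<in> Z"
  have "((\<lambda>z. C * Lp p z z0 * (norm (z - z0) + \<bar>g z - g z0\<bar>)) \<longlongrightarrow>
      C * Lp p z0 z0 * (norm (z0 - z0) + \<bar>g z0 - g z0\<bar>)) (at z0 within Z)"
    using assms(2) \<open>z0 \<in> Z\<close> unfolding Lp_def continuous_on_def by (intro tendsto_intros) auto
  then have "((\<lambda>z. C * Lp p z z0 * (norm (z - z0) + \<bar>g z - g z0\<bar>)) \<longlongrightarrow> 0) (at z0 within Z)"
    by simp
  moreover have "\<forall>\<^sub>F z in at z0 within Z.
      norm (\<phi> z (g z) - \<phi> z0 (g z0)) \<le> C * Lp p z z0 * (norm (z - z0) + \<bar>g z - g z0\<bar>)"
    using assms(1) \<open>z0 \<in> Z\<close> unfolding Lp_lipschitz_on_def eventually_at_filter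
    by (intro always_eventually) auto
  ultimately have "((\<lambda>z. \<phi> z (g z) - \<phi> z0 (g z0)) \<longlongrightarrow> 0) (at z0 within Z)"
    by (rule Lim_null_comparison[rotated])
  then show "((\<lambda>z. \<phi> z (g z)) \<longlongrightarrow> \<phi> z0 (g z0)) (at z0 within Z)"
    by (simp add: LIM_zero_iff)
qed

lemma Lp_lipschitz_on_growth:
  assumes "Lp_lipschitz_on C p Z \<phi>" "0 \<le> C" "1 \<le> p" "0 \<le> B"
  obtains A where
    "\<And>z w. z \<in> Z \<Longrightarrow> \<bar>w\<bar> \<le> B * max 1 (norm z) \<Longrightarrow> \<bar>\<phi> z w\<bar> \<le> A * max 1 (norm z) powr p"
proof (cases "Z = {}")
  case False
  then obtain z0 where "z0 \<in> Z" by blast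
  define A where "A = \<bar>\<phi> z0 0\<bar> + C * max 1 (norm z0) powr (p - 1) * (1 + norm z0 + B)"
  show ?thesis
  proof
    fix z w assume "z \<in> Z" and w: "\<bar>w\<bar> \<le> B * max 1 (norm z)"
    define m where "m = max 1 (norm z)"
    have m: "1 \<le> m" "norm z \<le> m" by (auto simp: m_def)
    have "norm (z - z0) + \<bar>w\<bar> \<le> (1 + norm z0 + B) * m"
      using norm_triangle_ineq4[of z z0] mult_left_mono[of 1 m "norm z0"] m w
      by (simp add: m_def algebra_simps)
    then have "C * Lp p z z0 * (norm (z - z0) + \<bar>w\<bar>)
        \<le> C * (m powr (p - 1) * max 1 (norm z0) powr (p - 1)) * ((1 + norm z0 + B) * m)"
      using Lp_le_mult[OF assms(3), of z z0] assms(2)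
      by (intro mult_mono) (auto simp: m_def Lp_def)
    also have "\<dots> = C * max 1 (norm z0) powr (p - 1) * (1 + norm z0 + B) * m powr p"
      using m powr_add[of m "p - 1" 1] by simp
    finally have "C * Lp p z z0 * (norm (z - z0) + \<bar>w\<bar>)
        \<le> C * max 1 (norm z0) powr (p - 1) * (1 + norm z0 + B) * m powr p" .
    moreover have "\<bar>\<phi> z0 0\<bar> \<le> \<bar>\<phi> z0 0\<bar> * m powr p"
      using m assms(3) ge_one_powr_ge_zero[of m p] by (simp add: mult_le_cancel_left1)
    moreover have "\<bar>\<phi> z w - \<phi> z0 0\<bar> \<le> C * Lp p z z0 * (norm (z - z0) + \<bar>w - 0\<bar>)"
      using assms(1) \<open>z \<in> Z\<close> \<open>z0 \<in> Z\<close> unfolding Lp_lipschitz_on_def by blast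
    moreover have "A * m powr p
        = \<bar>\<phi> z0 0\<bar> * m powr p + C * max 1 (norm z0) powr (p - 1) * (1 + norm z0 + B) * m powr p"
      by (simp add: A_def algebra_simps)
    ultimately show "\<bar>\<phi> z w\<bar> \<le> A * max 1 (norm z) powr p"
      unfolding m_def[symmetric] by (simp only: diff_zero) linarith
  qed
qed blast

locale loss_kernel_moment =
  fixes X :: "'a::real_normed_vector set" and Y :: "real set"
    and kx :: "'a \<Rightarrow> 'h::{real_inner, banach, second_countable_topology}"
    and c' c'' :: "'a \<times> real \<Rightarrow> real \<Rightarrow> real"
    and C1 p1 C3 :: real
    and Q :: "('a \<times> real) measure"
  assumes c'_Lp_lipschitz: "Lp_lipschitz_on C1 p1 (X \<times> Y) c'"
    and C1_nonneg: "0 \<le> C1" and p1_ge_1: "1 \<le> p1"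
    and c'_has_derivative: "\<And>z w. z \<in> X \<times> Y \<Longrightarrow> (c' z has_real_derivative c'' z w) (at w)"
    and kx_lipschitz: "C3-lipschitz_on X kx"
    and Q_moment: "Q \<in> moment_class (X \<times> Y) (p1 + 1)"
begin

lemma prob_on_Q: "prob_on (X \<times> Y) Q"
  using Q_moment by (simp add: moment_class_def)

sublocale prob_space Q
  using prob_on_Q by (simp add: prob_on_def)

lemma space_Q: "space Q = X \<times> Y"
  using prob_on_Q by (simp add: prob_on_def)

lemma continuous_on_kx_fst: "continuous_on (X \<times> Y) (\<lambda>z. kx (fst z))"
  using lipschitz_on_continuous_on[OF kx_lipschitz]
  by (rule continuous_on_compose2[OF _ continuous_on_fst]) auto

lemma continuous_on_c'_inner_kx:
  "continuous_on (X \<times> Y) (\<lambda>z. c' z (inner v (kx (fst z))))"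
  by (intro Lp_lipschitz_on_continuous_on[OF c'_Lp_lipschitz] continuous_intros continuous_on_kx_fst)

lemma integrable_weight: "integrable Q (\<lambda>z. max 1 (norm z) powr (p1 + 1))"
proof (rule Bochner_Integration.integrable_bound[where f="\<lambda>z. 1 + norm z powr (p1 + 1)"])
  show "integrable Q (\<lambda>z. 1 + norm z powr (p1 + 1))"
    using integrable_norm_powr_moment_class[OF Q_moment] by simp
  show "(\<lambda>z. max 1 (norm z) powr (p1 + 1)) \<in> borel_measurable Q"
    by (intro powr_real_measurable borel_measurable_const
        borel_measurable_continuous_on_prob_on[OF prob_on_Q] continuous_intros)
  show "AE z in Q. norm (max 1 (norm z) powr (p1 + 1)) \<le> norm (1 + norm z powr (p1 + 1))"
    using max_one_powr_le_one_add_powr[of _ "p1 + 1" "p1 + 1"] p1_ge_1 by (intro AE_I2) simp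
qed

lemma integrable_weight_bounded:
  fixes g :: "'a \<times> real \<Rightarrow> 'b::{banach, second_countable_topology}"
  assumes "g \<in> borel_measurable Q"
    and "\<And>z. z \<in> X \<times> Y \<Longrightarrow> norm (g z) \<le> K * max 1 (norm z) powr (p1 + 1)"
  shows "integrable Q g"
proof (rule Bochner_Integration.integrable_bound[where f="\<lambda>z. K * max 1 (norm z) powr (p1 + 1)"])
  show "integrable Q (\<lambda>z. K * max 1 (norm z) powr (p1 + 1))"
    using integrable_weight by simp
  show "AE z in Q. norm (g z) \<le> norm (K * max 1 (norm z) powr (p1 + 1))"
    using assms(2) by (intro AE_I2) (fastforce simp: space_Q)
qed (fact assms(1))

lemma kx_linear_growth:
  obtains A where "0 \<le> A" "\<And>z. z \<in> X \<times> Y \<Longrightarrow> norm (kx (fst z)) \<le> A * max 1 (norm z)"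
proof -
  obtain A where A: "0 \<le> A" "\<And>x. x \<in> X \<Longrightarrow> norm (kx x) \<le> A * max 1 (norm x)"
    using lipschitz_on_linear_growth[OF kx_lipschitz] by blast
  have "norm (kx (fst z)) \<le> A * max 1 (norm z)" if "z \<in> X \<times> Y" for z
  proof -
    have "max 1 (norm (fst z)) \<le> max 1 (norm z)"
      using norm_fst_le[of "fst z" "snd z"] by simp
    then have "A * max 1 (norm (fst z)) \<le> A * max 1 (norm z)"
      using A(1) by (rule mult_left_mono)
    moreover have "fst z \<in> X" using that by auto
    ultimately show ?thesis
      using A(2)[of "fst z"] by linarith
  qed
  with A(1) that show ?thesis by blast
qed

lemma integrable_c'_kx: "integrable Q (\<lambda>z. c' z (inner v (kx (fst z))) *\<^sub>R kx (fst z))"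
proof -
  obtain A where A: "0 \<le> A" "\<And>z. z \<in> X \<times> Y \<Longrightarrow> norm (kx (fst z)) \<le> A * max 1 (norm z)"
    using kx_linear_growth by blast
  obtain A' where A': "\<And>z w. z \<in> X \<times> Y \<Longrightarrow> \<bar>w\<bar> \<le> (norm v * A) * max 1 (norm z) \<Longrightarrow>
      \<bar>c' z w\<bar> \<le> A' * max 1 (norm z) powr p1"
    using Lp_lipschitz_on_growth[OF c'_Lp_lipschitz C1_nonneg p1_ge_1, of "norm v * A"] A(1) by auto
  show ?thesis
  proof (rule integrable_weight_bounded)
    show "(\<lambda>z. c' z (inner v (kx (fst z))) *\<^sub>R kx (fst z)) \<in> borel_measurable Q"
      by (intro borel_measurable_scaleR borel_measurable_continuous_on_prob_on[OF prob_on_Q]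
          continuous_on_kx_fst continuous_on_c'_inner_kx)
    fix z assume z: "z \<in> X \<times> Y"
    have "\<bar>inner v (kx (fst z))\<bar> \<le> norm v * (A * max 1 (norm z))"
      using Cauchy_Schwarz_ineq2[of v "kx (fst z)"] mult_left_mono[OF A(2)[OF z] norm_ge_zero[of v]]
      by linarith
    then have "\<bar>c' z (inner v (kx (fst z)))\<bar> \<le> A' * max 1 (norm z) powr p1"
      using A'[OF z] by (simp add: mult.assoc)
    then have "\<bar>c' z (inner v (kx (fst z)))\<bar> * norm (kx (fst z))
        \<le> (A' * max 1 (norm z) powr p1) * (A * max 1 (norm z))"
      using A(2)[OF z] by (intro mult_mono) auto
    also have "\<dots> = (A' * A) * max 1 (norm z) powr (p1 + 1)"
      by (simp add: max_one_norm_powr_mult[symmetric] mult_ac)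
    finally show "norm (c' z (inner v (kx (fst z))) *\<^sub>R kx (fst z))
        \<le> (A' * A) * max 1 (norm z) powr (p1 + 1)"
      by simp
  qed
qed

lemma scaleR_kx_bound:
  obtains K where "\<And>z e h. z \<in> X \<times> Y \<Longrightarrow>
      \<bar>e\<bar> \<le> C1 * max 1 (norm z) powr (p1 - 1) * \<bar>inner h (kx (fst z))\<bar> \<Longrightarrow>
      norm (e *\<^sub>R kx (fst z)) \<le> norm h * (K * max 1 (norm z) powr (p1 + 1))"
proof -
  obtain A where A: "0 \<le> A" "\<And>z. z \<in> X \<times> Y \<Longrightarrow> norm (kx (fst z)) \<le> A * max 1 (norm z)"
    using kx_linear_growth by blast
  have "norm (e *\<^sub>R kx (fst z)) \<le> norm h * ((C1 * A * A) * max 1 (norm z) powr (p1 + 1))"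
    if z: "z \<in> X \<times> Y"
      and e: "\<bar>e\<bar> \<le> C1 * max 1 (norm z) powr (p1 - 1) * \<bar>inner h (kx (fst z))\<bar>" for z e h
  proof -
    define m where "m = max 1 (norm z)"
    have k: "norm (kx (fst z)) \<le> A * m" using A(2)[OF z] by (simp add: m_def)
    have "\<bar>inner h (kx (fst z))\<bar> \<le> norm h * (A * m)"
      using Cauchy_Schwarz_ineq2[of h "kx (fst z)"] mult_left_mono[OF k norm_ge_zero[of h]] by linarith
    then have "\<bar>e\<bar> \<le> C1 * m powr (p1 - 1) * (norm h * (A * m))"
      using e C1_nonneg by (simp add: m_def) (smt (verit) mult_left_mono powr_ge_zero mult_nonneg_nonneg)
    then have "norm (e *\<^sub>R kx (fst z)) \<le> (C1 * m powr (p1 - 1) * (norm h * (A * m))) * (A * m)"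
      using k by (auto intro: mult_mono)
    also have "\<dots> = norm h * ((C1 * A * A) * ((m powr (p1 - 1) * m) * m))"
      by (simp add: mult_ac)
    also have "\<dots> = norm h * ((C1 * A * A) * m powr (p1 + 1))"
      unfolding m_def max_one_norm_powr_mult by simp
    finally show ?thesis by (simp add: m_def)
  qed
  then show ?thesis using that by blast
qed

lemma has_vector_derivative_c'_kx:
  assumes "z \<in> X \<times> Y"
  shows "((\<lambda>t. c' z (inner (f + t *\<^sub>R h) (kx (fst z))) *\<^sub>R kx (fst z))
      has_vector_derivative c'' z (inner f (kx (fst z))) *\<^sub>R Tx kx (fst z) h) (at 0)"
proof -
  define a b where "a = inner f (kx (fst z))" and "b = inner h (kx (fst z))"
  have "((\<lambda>t. a + t * b) has_real_derivative b) (at 0)"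
    by (auto intro!: derivative_eq_intros)
  moreover have "(c' z has_real_derivative c'' z a) (at ((\<lambda>t. a + t * b) 0))"
    using c'_has_derivative[OF assms] by simp
  ultimately have "((\<lambda>t. c' z (a + t * b)) has_real_derivative c'' z a * b) (at 0)"
    by (rule DERIV_chain2[rotated])
  then have "((\<lambda>t. c' z (a + t * b) *\<^sub>R kx (fst z))
      has_vector_derivative (c'' z a * b) *\<^sub>R kx (fst z)) (at 0)"
    using has_vector_derivative_scaleR[OF _ has_vector_derivative_const] by fastforce
  moreover have "c'' z a *\<^sub>R Tx kx (fst z) h = (c'' z a * b) *\<^sub>R kx (fst z)"
    by (simp add: Tx_def b_def inner_commute)
  ultimately show ?thesis
    by (simp add: a_def b_def inner_add_left)
qed

lemma borel_measurable_c''_Tx: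
  "(\<lambda>z. c'' z (inner f (kx (fst z))) *\<^sub>R Tx kx (fst z) h) \<in> borel_measurable Q"
proof (rule borel_measurable_vector_derivative)
  show "(\<lambda>z. c' z (inner (f + t *\<^sub>R h) (kx (fst z))) *\<^sub>R kx (fst z)) \<in> borel_measurable Q" for t
    by (intro borel_measurable_scaleR borel_measurable_continuous_on_prob_on[OF prob_on_Q]
        continuous_on_kx_fst continuous_on_c'_inner_kx)
qed (use has_vector_derivative_c'_kx in \<open>simp add: space_Q\<close>)

lemma c''_Tx_bound:
  obtains K where "\<And>z h. z \<in> X \<times> Y \<Longrightarrow>
      norm (c'' z (inner f (kx (fst z))) *\<^sub>R Tx kx (fst z) h) \<le> norm h * (K * max 1 (norm z) powr (p1 + 1))"
proof -
  obtain K where K: "\<And>z e h. z \<in> X \<times> Y \<Longrightarrow>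
      \<bar>e\<bar> \<le> C1 * max 1 (norm z) powr (p1 - 1) * \<bar>inner h (kx (fst z))\<bar> \<Longrightarrow>
      norm (e *\<^sub>R kx (fst z)) \<le> norm h * (K * max 1 (norm z) powr (p1 + 1))"
    using scaleR_kx_bound by blast
  have "norm (c'' z (inner f (kx (fst z))) *\<^sub>R Tx kx (fst z) h) \<le> norm h * (K * max 1 (norm z) powr (p1 + 1))"
    if z: "z \<in> X \<times> Y" for z h
  proof -
    have "\<bar>c'' z (inner f (kx (fst z)))\<bar> \<le> C1 * max 1 (norm z) powr (p1 - 1)"
      using c'_Lp_lipschitz z c'_has_derivative[OF z] by (rule Lp_lipschitz_on_abs_derivative_le)
    then have "\<bar>c'' z (inner f (kx (fst z))) * inner (kx (fst z)) h\<bar>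
        \<le> C1 * max 1 (norm z) powr (p1 - 1) * \<bar>inner h (kx (fst z))\<bar>"
      by (simp add: abs_mult inner_commute mult_right_mono)
    from K[OF z this] show ?thesis by (simp add: Tx_def)
  qed
  then show ?thesis using that by blast
qed

lemma integrable_c''_Tx: "integrable Q (\<lambda>z. c'' z (inner f (kx (fst z))) *\<^sub>R Tx kx (fst z) h)"
proof -
  obtain K where "\<And>z h. z \<in> X \<times> Y \<Longrightarrow>
      norm (c'' z (inner f (kx (fst z))) *\<^sub>R Tx kx (fst z) h) \<le> norm h * (K * max 1 (norm z) powr (p1 + 1))"
    using c''_Tx_bound by blast
  then show ?thesis
    by (intro integrable_weight_bounded[where K="norm h * K"] borel_measurable_c''_Tx) (simp add: mult.assoc)
qed

lemma Q_in_Ptilde: "Q \<in> Ptilde (X \<times> Y) c' c'' kx f h"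
  using prob_on_Q integrable_c'_kx[of f] integrable_c''_Tx[of f h]
  by (simp add: Ptilde_def integrable_iff_bounded abs_mult)

lemma bounded_linear_integral_c''_Tx:
  "bounded_linear (\<lambda>h. \<integral>z. c'' z (inner f (kx (fst z))) *\<^sub>R Tx kx (fst z) h \<partial>Q)"
proof -
  obtain K where K: "\<And>z h. z \<in> X \<times> Y \<Longrightarrow>
      norm (c'' z (inner f (kx (fst z))) *\<^sub>R Tx kx (fst z) h) \<le> norm h * (K * max 1 (norm z) powr (p1 + 1))"
    using c''_Tx_bound by blast
  show ?thesis
  proof (rule bounded_linear_integral)
    show "linear (\<lambda>h. c'' z (inner f (kx (fst z))) *\<^sub>R Tx kx (fst z) h)" for z
      by (rule linearI) (simp_all add: Tx_def inner_add_right scaleR_add_left scaleR_add_right)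
    show "integrable Q (\<lambda>z. K * max 1 (norm z) powr (p1 + 1))"
      using integrable_weight by simp
  qed (use borel_measurable_c''_Tx K in \<open>auto simp: space_Q\<close>)
qed

lemma has_vector_derivative_integral_c'_kx:
  "((\<lambda>t. \<integral>z. c' z (inner (f + t *\<^sub>R h) (kx (fst z))) *\<^sub>R kx (fst z) \<partial>Q)
     has_vector_derivative (\<integral>z. c'' z (inner f (kx (fst z))) *\<^sub>R Tx kx (fst z) h \<partial>Q)) (at 0)"
proof -
  obtain K where K: "\<And>z e h. z \<in> X \<times> Y \<Longrightarrow>
      \<bar>e\<bar> \<le> C1 * max 1 (norm z) powr (p1 - 1) * \<bar>inner h (kx (fst z))\<bar> \<Longrightarrow>
      norm (e *\<^sub>R kx (fst z)) \<le> norm h * (K * max 1 (norm z) powr (p1 + 1))"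
    using scaleR_kx_bound by blast
  show ?thesis
  proof (rule has_vector_derivative_integral)
    show "integrable Q (\<lambda>z. norm h * (K * max 1 (norm z) powr (p1 + 1)))"
      using integrable_weight by simp
    fix t :: real and z assume z: "z \<in> space Q" and "t \<noteq> 0"
    define a b where "a = inner f (kx (fst z))" and "b = inner h (kx (fst z))"
    have "\<bar>c' z (a + t * b) - c' z a\<bar> \<le> C1 * max 1 (norm z) powr (p1 - 1) * (\<bar>t\<bar> * \<bar>b\<bar>)"
      using Lp_lipschitz_on_second_arg[OF c'_Lp_lipschitz, of z "a + t * b" a] z
      by (simp add: space_Q abs_mult)
    then have "\<bar>(c' z (a + t * b) - c' z a) / t\<bar> \<le> C1 * max 1 (norm z) powr (p1 - 1) * \<bar>b\<bar>"
      using \<open>t \<noteq> 0\<close> by (simp add: abs_divide divide_le_eq mult_ac)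
    from K[OF _ this[unfolded b_def]] z
    show "norm ((c' z (inner (f + t *\<^sub>R h) (kx (fst z))) *\<^sub>R kx (fst z)
          - c' z (inner (f + 0 *\<^sub>R h) (kx (fst z))) *\<^sub>R kx (fst z)) /\<^sub>R (t - 0))
        \<le> norm h * (K * max 1 (norm z) powr (p1 + 1))"
      by (simp add: space_Q a_def b_def inner_add_left scaleR_diff_left[symmetric]
          divide_inverse mult.commute)
  qed (use integrable_c'_kx has_vector_derivative_c'_kx in \<open>auto simp: space_Q\<close>)
qed

end

theorem proposition3:
  fixes X :: "(real^'n) set" and Y :: "real set"
    and kx :: "real^'n \<Rightarrow> 'h::{real_inner, banach, second_countable_topology}"
    and c c' c'' :: "(real^'n) \<times> real \<Rightarrow> real \<Rightarrow> real"
    and f :: 'h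
    and p0 p1 p2 C0 C1 C2 C3 :: real
  assumes mercer: "mercer_kernel X (\<lambda>x y. inner (kx x) (kx y))"
    and rkhs: "closure (span (kx ` X)) = UNIV"
    and c_nonneg: "\<And>z w. z \<in> X \<times> Y \<Longrightarrow> c z w \<ge> 0"
    and C2': "p0 > 1" "C0 > 0"
      "\<And>z w. z \<in> X \<times> Y \<Longrightarrow> w \<in> Y \<Longrightarrow>
         \<bar>c z w\<bar> \<le> C0 * (norm z powr (p0 - 1) + \<bar>w\<bar> powr (p0 - 1) + 1)"
    and C4'_diff: "\<And>z w. z \<in> X \<times> Y \<Longrightarrow> (c z has_real_derivative c' z w) (at w)"
    and C4': "C1 > 0" "p1 \<ge> 1"
      "\<And>z1 z2 w1 w2. z1 \<in> X \<times> Y \<Longrightarrow> z2 \<in> X \<times> Y \<Longrightarrow>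
         \<bar>c' z1 w1 - c' z2 w2\<bar> \<le> C1 * Lp p1 z1 z2 * (norm (z1 - z2) + \<bar>w1 - w2\<bar>)"
    and C5_diff: "\<And>z w. z \<in> X \<times> Y \<Longrightarrow> (c' z has_real_derivative c'' z w) (at w)"
    and C5: "C2 > 0" "p2 \<ge> 1"
      "\<And>z1 z2 w1 w2. z1 \<in> X \<times> Y \<Longrightarrow> z2 \<in> X \<times> Y \<Longrightarrow> w1 \<in> Y \<Longrightarrow> w2 \<in> Y \<Longrightarrow>
         \<bar>c'' z1 w1 - c'' z2 w2\<bar> \<le> C2 * Lp p2 z1 z2 * (norm (z1 - z2) + \<bar>w1 - w2\<bar>)"
    and K1': "C3 > 0"
      "\<And>x1 x2. x1 \<in> X \<Longrightarrow> x2 \<in> X \<Longrightarrow> norm (kx x1 - kx x2) \<le> C3 * norm (x1 - x2)"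
  shows "(\<forall>h. moment_class (X \<times> Y) (max (p1 + 1) (p2 + 2)) \<subseteq> Ptilde (X \<times> Y) c' c'' kx f h)
    \<and> (\<forall>Q \<in> moment_class (X \<times> Y) (max (p1 + 1) (p2 + 2)).
         bounded_linear (\<lambda>h. \<integral>z. c'' z (inner f (kx (fst z))) *\<^sub>R Tx kx (fst z) h \<partial>Q)
       \<and> (\<forall>h. ((\<lambda>t::real. \<integral>z. c' z (inner (f + t *\<^sub>R h) (kx (fst z))) *\<^sub>R kx (fst z) \<partial>Q)
              has_vector_derivative (\<integral>z. c'' z (inner f (kx (fst z))) *\<^sub>R Tx kx (fst z) h \<partial>Q)) (at 0)))"
proof -
  have setting: "loss_kernel_moment X Y kx c' c'' C1 p1 C3 Q"
    if "Q \<in> moment_class (X \<times> Y) (max (p1 + 1) (p2 + 2))" for Q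
  proof
    show "Lp_lipschitz_on C1 p1 (X \<times> Y) c'"
      using C4'(3) by (simp add: Lp_lipschitz_on_def)
    show "C3-lipschitz_on X kx"
      using K1' by (intro lipschitz_onI) (auto simp: dist_norm)
    show "Q \<in> moment_class (X \<times> Y) (p1 + 1)"
      using moment_class_antimono[of "p1 + 1" "max (p1 + 1) (p2 + 2)"] that C4'(2) by auto
  qed (use C4'(1,2) C5_diff in auto)
  show ?thesis
    using loss_kernel_moment.Q_in_Ptilde[OF setting]
      loss_kernel_moment.bounded_linear_integral_c''_Tx[OF setting]
      loss_kernel_moment.has_vector_derivative_integral_c'_kx[OF setting]
    by blast
qed

end
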